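(* Consider a Gaussian linear concentration model on a subspace $L\subseteq\mathrm{Sym}(p)$ with $I_p\in L$, and let $W$ be a positive semidefinite matrix (e.g. $W=n^{-1}\sum_ix^i(x^i)^\top$). If the score matching equation $\Pi_L(K\circ W)=I_p$ has a unique solution $K\in L$ (equivalently, the linear map $K\mapsto\Pi_L(K\circ W)$ on $L$ has trivial kernel), then the maximum likelihood estimate exists, i.e. $\ell(K)=\log\det K-\operatorname{tr}(KW)$ attains its maximum on $L\cap\mathrm{Sym}_+(p)$.
   Context: $\mathrm{Sym}(p)$: real symmetric $p\times p$ matrices with trace inner product; $\mathrm{Sym}_+(p)$: positive definite elements; $\Pi_L$: orthogonal projection onto $L$; $A\circ B=(AB^\top+BA^\top)/2$. The model is $\{N_p(0,K^{-1}):K\in L\cap\mathrm{Sym}_+(p)\}$. *)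

theory Defs
  imports "HOL-Analysis.Analysis"
begin

type_synonym 'n mat = "real^'n^'n"

definition Sym :: "'n::finite mat set" where
  "Sym = {A. transpose A = A}"

definition pos_def :: "'n::finite mat \<Rightarrow> bool" where
  "pos_def A \<longleftrightarrow> transpose A = A \<and> (\<forall>x. x \<noteq> 0 \<longrightarrow> x \<bullet> (A *v x) > 0)"

definition Sym_plus :: "'n::finite mat set" where
  "Sym_plus = {A. pos_def A}"

definition pos_semidef :: "'n::finite mat \<Rightarrow> bool" where
  "pos_semidef A \<longleftrightarrow> transpose A = A \<and> (\<forall>x. x \<bullet> (A *v x) \<ge> 0)"

definition tr_inner :: "'n::finite mat \<Rightarrow> 'n mat \<Rightarrow> real" where
  "tr_inner A B = trace (A ** transpose B)"

definition proj :: "'n::finite mat set \<Rightarrow> 'n mat \<Rightarrow> 'n mat" where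
  "proj L X = (THE Y. Y \<in> L \<and> (\<forall>Z\<in>L. tr_inner (X - Y) Z = 0))"

definition circ_prod :: "'n::finite mat \<Rightarrow> 'n mat \<Rightarrow> 'n mat" where
  "circ_prod A B = (1/2) *\<^sub>R (A ** transpose B + B ** transpose A)"

definition loglik :: "'n::finite mat \<Rightarrow> 'n mat \<Rightarrow> real" where
  "loglik W K = ln (det K) - trace (K ** W)"

end

theory Submission
  imports Defs
begin

text \<open>
  If a nonzero positive semidefinite \<open>K \<in> L\<close> had \<open>tr (K W) = 0\<close>, then \<open>K W = 0\<close> (write \<open>W\<close> as a
  sum of rank-one matrices \<open>u u\<^sup>T\<close>: each term \<open>u\<^sup>T K u\<close> must vanish, so \<open>K u = 0\<close>), hence
  \<open>K \<circ> W = 0\<close> and with any solution \<open>K\<^sub>1\<close> of the score matching equation also \<open>K\<^sub>1 + K\<close>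
  would solve it.
  So \<open>K \<mapsto> tr (K W)\<close> is positive on the nonzero part of the closed cone
  \<open>L \<inter> Sym\<^sub>\<ge>(p)\<close>, and by compactness of its unit sphere \<open>tr (K W) \<ge> c \<parallel>K\<parallel>\<close> there.
  As \<open>log det K\<close> grows only logarithmically in \<open>\<parallel>K\<parallel>\<close>, the superlevel set
  \<open>{\<ell> \<ge> \<ell>(I)}\<close> is bounded; it is also closed, since \<open>det\<close> stays bounded away from \<open>0\<close> on it.
  A maximiser of \<open>\<ell>\<close> on this compact set is the MLE.
\<close>

definition outer :: "real^'n::finite \<Rightarrow> real^'n \<Rightarrow> real^'n^'n" where
  "outer u v = (\<chi> j k. u$j * v$k)"

lemma outer_0_left [simp]: "outer 0 v = 0"
  by (simp add: vec_eq_iff outer_def)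

lemma matrix_mult_outer: "(A::real^'n::finite^'n) ** outer u v = outer (A *v u) v"
  by (simp add: vec_eq_iff outer_def matrix_matrix_mult_def matrix_vector_mult_def
      sum_distrib_right mult.assoc)

lemma trace_outer: "trace (outer u v) = u \<bullet> v"
  by (simp add: trace_def outer_def inner_vec_def)

lemma inner_outer_mult: "x \<bullet> (outer u u *v x) = (u \<bullet> x)\<^sup>2"
  by (simp add: outer_def inner_vec_def matrix_vector_mult_def power2_eq_square
      sum_distrib_left sum_distrib_right mult_ac)

lemma matrix_vector_mult_axis: "((B::real^'n::finite^'n) *v axis i 1) $ j = B$j$i"
  by (simp add: matrix_vector_mult_def axis_def if_distrib cong: if_cong)

lemma inner_axis_matrix_axis: "axis i 1 \<bullet> ((B::real^'n::finite^'n) *v axis i 1) = B$i$i"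
  by (simp add: inner_axis' matrix_vector_mult_axis)

lemma symmetric_inner_matrix_commute:
  "transpose (B::real^'n::finite^'n) = B \<Longrightarrow> x \<bullet> (B *v y) = y \<bullet> (B *v x)"
  by (metis dot_lmul_matrix inner_commute vector_transpose_matrix)

lemma symmetric_quadratic_form_add:
  fixes B :: "real^'n::finite^'n"
  assumes "transpose B = B"
  shows "(x + t *\<^sub>R y) \<bullet> (B *v (x + t *\<^sub>R y))
           = x \<bullet> (B *v x) + 2 * t * (y \<bullet> (B *v x)) + t\<^sup>2 * (y \<bullet> (B *v y))"
  using symmetric_inner_matrix_commute[OF assms, of x y]
  by (simp add: matrix_vector_right_distrib matrix_vector_mult_scaleR inner_add_left
      inner_add_right algebra_simps power2_eq_square)

lemma pos_semidef_diag_nonneg: "pos_semidef (B::real^'n::finite^'n) \<Longrightarrow> B$i$i \<ge> 0"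
  by (metis pos_semidef_def inner_axis_matrix_axis)

lemma pos_semidef_quadratic_form_eq_0:
  fixes A :: "real^'n::finite^'n"
  assumes "pos_semidef A" "x \<bullet> (A *v x) = 0"
  shows "A *v x = 0"
proof -
  have sym: "transpose A = A" and nonneg: "\<And>z. z \<bullet> (A *v z) \<ge> 0"
    using assms(1) by (auto simp: pos_semidef_def)
  define y where "y = A *v x"
  define b where "b = y \<bullet> y"
  define d where "d = y \<bullet> (A *v y)"
  have "d \<ge> 0" using nonneg by (simp add: d_def)
  have "0 \<le> 2 * t * b + t\<^sup>2 * d" for t
    using nonneg[of "x + t *\<^sub>R y"] symmetric_quadratic_form_add[OF sym, of x t y] assms(2)
    by (simp add: b_def d_def y_def)
  from this[of "- b / (d + 1)"]
  have "0 \<le> 2 * (- b / (d + 1)) * b + (- b / (d + 1))\<^sup>2 * d" .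
  also have "\<dots> = - b\<^sup>2 * (d + 2) / (d + 1)\<^sup>2"
    using \<open>d \<ge> 0\<close> by (simp add: divide_simps power2_eq_square) (simp add: algebra_simps)
  finally have "b\<^sup>2 * (d + 2) / (d + 1)\<^sup>2 \<le> 0" by simp
  moreover have "b\<^sup>2 * (d + 2) / (d + 1)\<^sup>2 > 0" if "b \<noteq> 0"
    using that \<open>d \<ge> 0\<close> by (intro divide_pos_pos mult_pos_pos) auto
  ultimately have "b = 0" by fastforce
  thus ?thesis by (simp add: b_def y_def)
qed

lemma pos_semidef_diag_eq_0:
  fixes B :: "real^'n::finite^'n"
  assumes "pos_semidef B" "B$j$j = 0"
  shows "B$k$j = 0"
  using pos_semidef_quadratic_form_eq_0[OF assms(1), of "axis j 1"] assms(2)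
  by (metis inner_axis_matrix_axis matrix_vector_mult_axis zero_index)

lemma pos_semidef_column_inner_le:
  fixes B :: "real^'n::finite^'n"
  assumes "pos_semidef B"
  shows "((B *v axis i 1) \<bullet> x)\<^sup>2 \<le> B$i$i * (x \<bullet> (B *v x))"
proof -
  have sym: "transpose B = B" and nonneg: "\<And>z. z \<bullet> (B *v z) \<ge> 0"
    using assms by (auto simp: pos_semidef_def)
  define s where "s = (B *v axis i 1) \<bullet> x"
  have quad: "0 \<le> t\<^sup>2 * B$i$i + 2 * t * s + x \<bullet> (B *v x)" for t
    using nonneg[of "x + t *\<^sub>R axis i 1"] symmetric_quadratic_form_add[OF sym, of x t "axis i 1"]
      symmetric_inner_matrix_commute[OF sym, of "axis i 1" x] inner_axis_matrix_axis[of i B]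
    by (simp add: s_def inner_commute)
  show ?thesis
  proof (cases "B$i$i = 0")
    case True
    then have "B *v axis i 1 = 0"
      using pos_semidef_diag_eq_0[OF assms] by (simp add: vec_eq_iff matrix_vector_mult_axis)
    with True show ?thesis by simp
  next
    case False
    then have b: "B$i$i > 0" using pos_semidef_diag_nonneg[OF assms, of i] by simp
    with quad[of "- s / B$i$i"] have "s\<^sup>2 / B$i$i \<le> x \<bullet> (B *v x)"
      by (simp add: field_simps power2_eq_square)
    with b show ?thesis by (simp add: s_def field_simps)
  qed
qed

lemma symmetric_entry_commute: "transpose (B::real^'n::finite^'n) = B \<Longrightarrow> B$j$k = B$k$j"
  by (metis transpose_def vec_lambda_beta)

lemma pos_semidef_minus_outer_column:
  fixes B :: "real^'n::finite^'n"
  assumes "pos_semidef B" and "B$i$i > 0"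
  defines "v \<equiv> (1 / sqrt (B$i$i)) *\<^sub>R (B *v axis i 1)"
  shows "pos_semidef (B - outer v v)"
  unfolding pos_semidef_def
proof (intro conjI allI)
  have sym: "transpose B = B" using assms(1) by (simp add: pos_semidef_def)
  have "transpose (outer v v) = outer v v"
    by (simp add: vec_eq_iff transpose_def outer_def mult.commute)
  with sym show "transpose (B - outer v v) = B - outer v v"
    by (simp add: vec_eq_iff transpose_def)
  fix x :: "real^'n"
  have "(v \<bullet> x)\<^sup>2 = ((B *v axis i 1) \<bullet> x)\<^sup>2 / B$i$i"
    using assms(2) by (simp add: v_def power_divide)
  then have "x \<bullet> ((B - outer v v) *v x) = x \<bullet> (B *v x) - ((B *v axis i 1) \<bullet> x)\<^sup>2 / B$i$i"
    by (simp add: matrix_vector_mult_diff_rdistrib inner_diff_right inner_outer_mult)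
  also have "\<dots> \<ge> 0"
    using pos_semidef_column_inner_le[OF assms(1), of i x] assms(2) by (simp add: field_simps)
  finally show "0 \<le> x \<bullet> ((B - outer v v) *v x)" .
qed

lemma pos_semidef_eq_sum_outer:
  fixes B :: "real^'n::finite^'n"
  assumes "pos_semidef B"
  shows "\<exists>us. B = (\<Sum>u\<leftarrow>us. outer u u)"
  using assms
proof (induction "card {j. B$j$j \<noteq> 0}" arbitrary: B rule: less_induct)
  case less
  show ?case
  proof (cases "\<exists>i. B$i$i \<noteq> 0")
    case False
    then have "B = 0"
      using pos_semidef_diag_eq_0[OF less.prems] by (auto simp: vec_eq_iff)
    then show ?thesis by (intro exI[of _ "[]"]) simp
  next
    case True
    then obtain i where "B$i$i \<noteq> 0" ..
    then have b: "B$i$i > 0" using pos_semidef_diag_nonneg[OF less.prems, of i] by simp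
    define v where "v = (1 / sqrt (B$i$i)) *\<^sub>R (B *v axis i 1)"
    define B' where "B' = B - outer v v"
    have sym: "transpose B = B" using less.prems by (simp add: pos_semidef_def)
    have "v$j = B$i$j / sqrt (B$i$i)" for j
      using symmetric_entry_commute[OF sym, of j i] by (simp add: v_def matrix_vector_mult_axis)
    then have B'_diag: "B'$j$j = B$j$j - (B$i$j)\<^sup>2 / B$i$i" for j
      using b by (simp add: B'_def outer_def power_divide flip: power2_eq_square)
    have "{j. B'$j$j \<noteq> 0} \<subseteq> {j. B$j$j \<noteq> 0}"
      using pos_semidef_diag_eq_0[OF less.prems] by (auto simp: B'_diag)
    moreover have "B'$i$i = 0" using b by (simp add: B'_diag power2_eq_square)
    ultimately have "{j. B'$j$j \<noteq> 0} \<subset> {j. B$j$j \<noteq> 0}"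
      using \<open>B$i$i \<noteq> 0\<close> by blast
    then have "card {j. B'$j$j \<noteq> 0} < card {j. B$j$j \<noteq> 0}"
      by (simp add: psubset_card_mono)
    moreover have "pos_semidef B'"
      unfolding B'_def v_def by (rule pos_semidef_minus_outer_column[OF less.prems b])
    ultimately obtain us where "B' = (\<Sum>u\<leftarrow>us. outer u u)"
      using less.hyps by presburger
    then have "B = (\<Sum>u\<leftarrow>v # us. outer u u)" by (simp add: B'_def diff_eq_eq add.commute)
    then show ?thesis ..
  qed
qed

lemma matrix_mult_sum_outer:
  "(A::real^'n::finite^'n) ** (\<Sum>u\<leftarrow>us. outer u u) = (\<Sum>u\<leftarrow>us. outer (A *v u) u)"
  by (induction us) (simp_all add: matrix_add_ldistrib matrix_mult_outer)

lemma trace_mult_pos_semidef: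
  fixes A B :: "real^'n::finite^'n"
  assumes A: "pos_semidef A" and B: "pos_semidef B"
  shows trace_mult_pos_semidef_nonneg: "trace (A ** B) \<ge> 0"
    and trace_mult_pos_semidef_eq_0: "trace (A ** B) = 0 \<Longrightarrow> A ** B = 0"
proof -
  obtain us where B_eq: "B = (\<Sum>u\<leftarrow>us. outer u u)"
    using pos_semidef_eq_sum_outer[OF B] by blast
  have nonneg: "0 \<le> u \<bullet> (A *v u)" for u using A by (simp add: pos_semidef_def)
  have trace_eq: "trace (A ** B) = (\<Sum>u\<leftarrow>us. u \<bullet> (A *v u))"
    unfolding B_eq matrix_mult_sum_outer
    by (induction us) (simp_all add: trace_add trace_outer inner_commute trace_0[unfolded mat_0])
  then show "trace (A ** B) \<ge> 0" by (auto intro!: sum_list_nonneg nonneg)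
  assume "trace (A ** B) = 0"
  then have "u \<bullet> (A *v u) = 0" if "u \<in> set us" for u
    using that sum_list_nonneg_eq_0_iff[of "map (\<lambda>u. u \<bullet> (A *v u)) us"] nonneg
    by (auto simp: trace_eq)
  then have "A *v u = 0" if "u \<in> set us" for u
    using that pos_semidef_quadratic_form_eq_0[OF A] by blast
  then show "A ** B = 0"
    unfolding B_eq matrix_mult_sum_outer by (induction us) simp_all
qed

lemma linear_pos_on_closed_cone_coercive:
  fixes C :: "'a::euclidean_space set" and f :: "'a \<Rightarrow> real"
  assumes "closed C" and cone: "\<And>x t. x \<in> C \<Longrightarrow> t \<ge> 0 \<Longrightarrow> t *\<^sub>R x \<in> C"
    and "linear f" and pos: "\<And>x. x \<in> C \<Longrightarrow> x \<noteq> 0 \<Longrightarrow> f x > 0"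
  obtains c where "c > 0" and "\<And>x. x \<in> C \<Longrightarrow> c * norm x \<le> f x"
proof -
  define S where "S = C \<inter> sphere 0 1"
  have "compact S"
    unfolding S_def using \<open>closed C\<close>
    by (simp add: compact_eq_bounded_closed closed_Int bounded_Int)
  have f_cont: "continuous_on S f"
    using \<open>linear f\<close> by (simp add: linear_conv_bounded_linear linear_continuous_on)
  have f_lin: "f (t *\<^sub>R x) = t * f x" for t x
    using \<open>linear f\<close> by (simp add: linear_scale)
  have normalized: "(1 / norm x) *\<^sub>R x \<in> S" if "x \<in> C" "x \<noteq> 0" for x
    using that cone by (simp add: S_def)
  show ?thesis
  proof (cases "S = {}")
    case True
    then have "norm x \<le> f x" if "x \<in> C" for x
      using normalized that linear_0[OF \<open>linear f\<close>] by fastforce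
    then show ?thesis by (intro that[of 1]) simp_all
  next
    case False
    obtain x0 where x0: "x0 \<in> S" and min: "\<And>y. y \<in> S \<Longrightarrow> f x0 \<le> f y"
      using continuous_attains_inf[OF \<open>compact S\<close> False f_cont] by blast
    have "x0 \<in> C" "x0 \<noteq> 0" using x0 by (auto simp: S_def)
    then have "f x0 > 0" by (rule pos)
    moreover have "f x0 * norm x \<le> f x" if "x \<in> C" for x
    proof (cases "x = 0")
      case True then show ?thesis by (simp add: linear_0[OF \<open>linear f\<close>])
    next
      case False
      with min[OF normalized[OF that False]] show ?thesis
        by (simp add: f_lin field_simps)
    qed
    ultimately show ?thesis by (rule that)
  qed
qed

lemma closed_pos_semidef: "closed {K::real^'n::finite^'n. pos_semidef K}"
proof -
  have "{K::real^'n^'n. pos_semidef K}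
          = {K. transpose K = K} \<inter> (\<Inter>x. {K. 0 \<le> x \<bullet> (K *v x)})"
    by (auto simp: pos_semidef_def)
  moreover have "closed {K::real^'n^'n. transpose K = K}"
    unfolding transpose_def by (intro closed_Collect_eq continuous_intros)
  moreover have "closed {K::real^'n^'n. 0 \<le> x \<bullet> (K *v x)}" for x
    unfolding inner_vec_def matrix_vector_mult_def
    by (intro closed_Collect_le continuous_intros)
  ultimately show ?thesis by (auto intro!: closed_INT)
qed

lemma pos_semidef_scaleR: "t \<ge> 0 \<Longrightarrow> pos_semidef K \<Longrightarrow> pos_semidef (t *\<^sub>R (K::real^'n::finite^'n))"
  by (simp add: pos_semidef_def transpose_scalar scaleR_matrix_vector_assoc[symmetric])

lemma circ_prod_add_left: "circ_prod (X + Y) W = circ_prod X W + circ_prod Y (W::real^'n::finite^'n)"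
  by (simp add: circ_prod_def vec_eq_iff matrix_matrix_mult_def transpose_def sum.distrib
      algebra_simps)

lemma circ_prod_eq_0_if_trace_mult_eq_0:
  fixes K W :: "real^'n::finite^'n"
  assumes "pos_semidef K" "pos_semidef W" "trace (K ** W) = 0"
  shows "circ_prod K W = 0"
proof -
  have "K ** W = 0" using trace_mult_pos_semidef_eq_0 assms by blast
  moreover have "W ** K = transpose (K ** W)"
    using assms(1,2) by (simp add: pos_semidef_def matrix_transpose_mul)
  ultimately show ?thesis
    using assms(1,2) by (simp add: circ_prod_def pos_semidef_def transpose_def vec_eq_iff)
qed

lemma trace_mult_pos_if_unique_score_solution:
  fixes L :: "(real^'n::finite^'n) set" and W :: "real^'n^'n"
  assumes "subspace L" and "pos_semidef W"
    and unique: "\<exists>!K. K \<in> L \<and> proj L (circ_prod K W) = Y"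
    and "K \<in> L" "pos_semidef K" "K \<noteq> 0"
  shows "trace (K ** W) > 0"
proof -
  obtain K1 where K1: "K1 \<in> L" "proj L (circ_prod K1 W) = Y" using unique by blast
  have "trace (K ** W) \<noteq> 0"
  proof
    assume "trace (K ** W) = 0"
    then have "circ_prod (K1 + K) W = circ_prod K1 W"
      using circ_prod_eq_0_if_trace_mult_eq_0 assms(2,5) by (simp add: circ_prod_add_left)
    moreover have "K1 + K \<in> L" using \<open>subspace L\<close> K1(1) \<open>K \<in> L\<close> by (rule subspace_add)
    ultimately have "K1 + K = K1" using unique K1 by metis
    with \<open>K \<noteq> 0\<close> show False by simp
  qed
  then show ?thesis using trace_mult_pos_semidef_nonneg[OF assms(5,2)] by simp
qed

lemma abs_det_le_norm_power:
  fixes K :: "real^'n::finite^'n"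
  shows "\<bar>det K\<bar> \<le> fact CARD('n) * norm K ^ CARD('n)"
proof -
  let ?P = "{p. p permutes (UNIV::'n set)}"
  have "\<bar>det K\<bar> \<le> (\<Sum>p\<in>?P. \<bar>of_int (sign p) * (\<Prod>i\<in>UNIV. K$i$p i)\<bar>)"
    unfolding det_def by (rule sum_abs)
  also have "\<dots> \<le> (\<Sum>p\<in>?P. norm K ^ CARD('n))"
  proof (rule sum_mono)
    fix p
    have "\<bar>K$i$p i\<bar> \<le> norm K" for i
      using component_le_norm_cart[of "K$i" "p i"] Finite_Cartesian_Product.norm_nth_le[of K i]
      by linarith
    then have "(\<Prod>i\<in>UNIV. \<bar>K$i$p i\<bar>) \<le> (\<Prod>i\<in>(UNIV::'n set). norm K)"
      by (intro prod_mono) simp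
    then show "\<bar>of_int (sign p) * (\<Prod>i\<in>UNIV. K$i$p i)\<bar> \<le> norm K ^ CARD('n)"
      by (simp add: abs_mult abs_prod sign_def)
  qed
  also have "\<dots> = fact CARD('n) * norm K ^ CARD('n)"
    by (simp add: card_permutations)
  finally show ?thesis .
qed

lemma ln_det_le_linear:
  fixes c :: real
  assumes "c > 0"
  obtains B where "\<And>K::real^'n::finite^'n. det K > 0 \<Longrightarrow> ln (det K) \<le> B + c * norm K"
proof
  define p where "p = real CARD('n)"
  have "p > 0" by (simp add: p_def)
  define e where "e = c / p"
  have "e > 0" using \<open>c > 0\<close> \<open>p > 0\<close> by (simp add: e_def)
  fix K :: "real^'n^'n"
  assume "det K > 0"
  then have "K \<noteq> 0" by (metis det_0 mat_0 less_irrefl)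
  then have r: "norm K > 0" by simp
  have "ln (det K) \<le> ln (fact CARD('n) * norm K ^ CARD('n))"
    using \<open>det K > 0\<close> abs_det_le_norm_power[of K] by simp
  also have "\<dots> = ln (fact CARD('n)) + p * ln (norm K)"
    using r by (simp add: ln_mult ln_realpow p_def)
  also have "p * ln (norm K) \<le> p * (e * norm K - 1 - ln e)"
    using ln_le_minus_one[of "e * norm K"] \<open>e > 0\<close> r \<open>p > 0\<close> by (simp add: ln_mult)
  also have "\<dots> = c * norm K - p - p * ln e"
    using \<open>p > 0\<close> by (simp add: e_def field_simps)
  finally show "ln (det K) \<le> (ln (fact CARD('n)) - p - p * ln e) + c * norm K" by simp
qed

lemma det_pos_if_pos_def:
  fixes K :: "real^'n::finite^'n"
  assumes "pos_def K"
  shows "det K > 0"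
proof (rule ccontr)
  assume "\<not> det K > 0"
  define M where "M t = (1 - t) *\<^sub>R mat 1 + t *\<^sub>R K" for t :: real
  \<comment> \<open>the segment from the identity to \<open>K\<close> stays positive definite, yet \<open>det\<close> changes sign on it\<close>
  have "\<forall>t. 0 \<le> t \<and> t \<le> 1 \<longrightarrow> isCont (\<lambda>t. det (M t)) t"
    unfolding M_def det_def by (intro allI impI continuous_intros)
  then obtain t where t: "0 \<le> t" "t \<le> 1" "det (M t) = 0"
    using IVT2[of "\<lambda>t. det (M t)" 1 0 0] \<open>\<not> det K > 0\<close> by (auto simp: M_def)
  then obtain x :: "real^'n" where x: "x \<noteq> 0" "M t *v x = 0"
    using det_eq_0_rank[of "M t"] matrix_nonfull_linear_equations_eq by (metis less_irrefl)
  have "x \<bullet> (M t *v x) = (1 - t) * (x \<bullet> x) + t * (x \<bullet> (K *v x))"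
    by (simp add: M_def matrix_vector_mult_add_rdistrib scaleR_matrix_vector_assoc[symmetric]
        inner_add_right)
  moreover have "(1 - t) * (x \<bullet> x) + t * (x \<bullet> (K *v x)) > 0"
    using assms x(1) t(1,2) unfolding pos_def_def
    by (cases "t = 0") (auto intro: add_nonneg_pos add_pos_nonneg)
  ultimately show False using x(2) by simp
qed

lemma pos_def_iff_pos_semidef_det:
  "pos_def (K::real^'n::finite^'n) \<longleftrightarrow> pos_semidef K \<and> det K > 0"
proof
  assume "pos_def K"
  moreover have "x \<bullet> (K *v x) \<ge> 0" for x
    using \<open>pos_def K\<close> by (cases "x = 0") (auto simp: pos_def_def less_imp_le)
  ultimately show "pos_semidef K \<and> det K > 0"
    using det_pos_if_pos_def by (auto simp: pos_def_def pos_semidef_def)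
next
  assume K: "pos_semidef K \<and> det K > 0"
  have "x \<bullet> (K *v x) \<noteq> 0" if "x \<noteq> 0" for x
    using pos_semidef_quadratic_form_eq_0[of K x] K that
    by (metis invertible_det_nz invertible_def matrix_vector_mul_assoc matrix_vector_mul_lid
        matrix_vector_mult_0_right less_irrefl)
  with K show "pos_def K"
    by (auto simp: pos_def_def pos_semidef_def order_le_neq_trans)
qed

lemma continuous_on_det: "continuous_on S (det :: real^'n::finite^'n \<Rightarrow> real)"
  unfolding det_def by (intro continuous_intros)

lemma linear_trace_mult_right: "linear (\<lambda>K::real^'n::finite^'n. trace (K ** W))"
  unfolding trace_def matrix_matrix_mult_def
  by (intro linearI) (simp_all add: sum.distrib sum_distrib_left algebra_simps)

lemma continuous_on_trace_mult_right:
  "continuous_on S (\<lambda>K::real^'n::finite^'n. trace (K ** W))"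
  using linear_trace_mult_right linear_conv_bounded_linear linear_continuous_on by blast

lemma continuous_on_loglik: "continuous_on {K. det K > 0} (loglik (W::real^'n::finite^'n))"
  unfolding loglik_def
  by (intro continuous_on_diff continuous_on_ln continuous_on_det continuous_on_trace_mult_right)
    auto

lemma compact_loglik_superlevel:
  fixes L :: "(real^'n::finite^'n) set" and W :: "real^'n^'n"
  assumes "closed L" "c > 0"
    and coercive: "\<And>K. K \<in> L \<Longrightarrow> pos_semidef K \<Longrightarrow> c * norm K \<le> trace (K ** W)"
  shows "compact {K \<in> L. pos_semidef K \<and> exp a \<le> det K \<and> a \<le> loglik W K}"
    (is "compact ?T")
proof -
  \<comment> \<open>\<open>ln\<close> is junk on nonpositive reals; bounding \<open>det\<close> below keeps \<open>loglik W\<close> continuous on \<open>D\<close>\<close>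
  define D where "D = L \<inter> {K. pos_semidef K} \<inter> {K. exp a \<le> det K}"
  have "closed D"
    unfolding D_def using \<open>closed L\<close> closed_pos_semidef
    by (intro closed_Int closed_Collect_le continuous_on_const continuous_on_det)
  moreover have "continuous_on D (loglik W)"
    using continuous_on_loglik by (rule continuous_on_subset)
      (auto simp: D_def dest: order.strict_trans2[OF exp_gt_zero])
  moreover have "?T = D \<inter> loglik W -` {a..}" by (auto simp: D_def)
  ultimately have "closed ?T" by (auto intro: continuous_closed_preimage)
  obtain B where B: "\<And>K::real^'n^'n. det K > 0 \<Longrightarrow> ln (det K) \<le> B + c / 2 * norm K"
    using ln_det_le_linear[of "c / 2"] \<open>c > 0\<close> by auto
  have "norm K \<le> 2 * (B - a) / c" if "K \<in> ?T" for K
  proof -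
    from that have "K \<in> L" "pos_semidef K" "det K > 0" "a \<le> ln (det K) - trace (K ** W)"
      by (auto simp: loglik_def dest: order.strict_trans2[OF exp_gt_zero])
    with B coercive have "a \<le> B + c / 2 * norm K - c * norm K" by fastforce
    with \<open>c > 0\<close> show ?thesis by (simp add: field_simps)
  qed
  then have "bounded ?T" by (meson bounded_iff)
  with \<open>closed ?T\<close> show ?thesis by (simp add: compact_eq_bounded_closed)
qed

lemma loglik_attains_max_if_coercive:
  fixes L :: "(real^'n::finite^'n) set" and W :: "real^'n^'n"
  assumes "closed L" "mat 1 \<in> L" "c > 0"
    and coercive: "\<And>K. K \<in> L \<Longrightarrow> pos_semidef K \<Longrightarrow> c * norm K \<le> trace (K ** W)"
  shows "\<exists>K \<in> L \<inter> Sym_plus. \<forall>K' \<in> L \<inter> Sym_plus. loglik W K' \<le> loglik W K"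
proof -
  define a where "a = loglik W (mat 1)"
  define T where "T = {K \<in> L. pos_semidef K \<and> exp a \<le> det K \<and> a \<le> loglik W K}"
  have "compact T"
    unfolding T_def using \<open>closed L\<close> \<open>c > 0\<close> coercive by (rule compact_loglik_superlevel)
  have psd_1: "pos_semidef (mat 1 :: real^'n^'n)" by (simp add: pos_semidef_def)
  have "0 \<le> c * norm (mat 1 :: real^'n^'n)" using \<open>c > 0\<close> by simp
  with coercive[OF \<open>mat 1 \<in> L\<close> psd_1] have "a \<le> 0"
    by (simp add: a_def loglik_def)
  then have "mat 1 \<in> T" using \<open>mat 1 \<in> L\<close> psd_1 by (simp add: T_def a_def)
  moreover have "continuous_on T (loglik W)"
    using continuous_on_loglik by (rule continuous_on_subset)
      (auto simp: T_def dest: order.strict_trans2[OF exp_gt_zero])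
  ultimately obtain K where K: "K \<in> T" and K_max: "\<And>K'. K' \<in> T \<Longrightarrow> loglik W K' \<le> loglik W K"
    using continuous_attains_sup[OF \<open>compact T\<close>] by blast
  have "K \<in> L \<inter> Sym_plus"
    using K by (auto simp: T_def Sym_plus_def pos_def_iff_pos_semidef_det
        dest: order.strict_trans2[OF exp_gt_zero])
  moreover have "loglik W K' \<le> loglik W K" if "K' \<in> L \<inter> Sym_plus" for K'
  proof (cases "a \<le> loglik W K'")
    case True
    from that have K': "K' \<in> L" "pos_semidef K'" "det K' > 0"
      by (auto simp: Sym_plus_def pos_def_iff_pos_semidef_det)
    have "0 \<le> c * norm K'" using \<open>c > 0\<close> by simp
    with True coercive[OF K'(1,2)] have "a \<le> ln (det K')" by (simp add: loglik_def)
    then have "exp a \<le> det K'" using K'(3) by (metis exp_le_cancel_iff exp_ln)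
    with K' True have "K' \<in> T" by (simp add: T_def)
    then show ?thesis by (rule K_max)
  next
    case False
    then show ?thesis using K_max[OF \<open>mat 1 \<in> T\<close>] by (simp add: a_def)
  qed
  ultimately show ?thesis by blast
qed

theorem proposition3:
  fixes L :: "(real^'n::finite^'n) set" and W :: "real^'n^'n"
  assumes "subspace L" and "L \<subseteq> Sym" and "mat 1 \<in> L"
    and "pos_semidef W"
    and "\<exists>!K. K \<in> L \<and> proj L (circ_prod K W) = mat 1"
  shows "\<exists>K \<in> L \<inter> Sym_plus. \<forall>K' \<in> L \<inter> Sym_plus. loglik W K' \<le> loglik W K"
proof -
  have "closed L" using \<open>subspace L\<close> by (rule closed_subspace)
  let ?C = "L \<inter> {K. pos_semidef K}"
  have "closed ?C" using \<open>closed L\<close> closed_pos_semidef by (rule closed_Int)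
  moreover have "t *\<^sub>R K \<in> ?C" if "K \<in> ?C" "t \<ge> 0" for K t
    using that \<open>subspace L\<close> by (auto intro: subspace_scale pos_semidef_scaleR)
  moreover have "trace (K ** W) > 0" if "K \<in> ?C" "K \<noteq> 0" for K
    using trace_mult_pos_if_unique_score_solution[OF \<open>subspace L\<close> \<open>pos_semidef W\<close> assms(5)]
      that by blast
  ultimately obtain c where "c > 0" and "\<And>K. K \<in> ?C \<Longrightarrow> c * norm K \<le> trace (K ** W)"
    using linear_pos_on_closed_cone_coercive[OF _ _ linear_trace_mult_right] by blast
  then show ?thesis
    using loglik_attains_max_if_coercive[OF \<open>closed L\<close> \<open>mat 1 \<in> L\<close>] by blast
qed

end
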